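(* The Bergman projection $P$ on the bidisc $\mathbb{D}^2$ is not of weak-type $(1,1)$: there is no constant $C>0$ such that for all bounded measurable functions $f$ on $\mathbb{D}^2$ and all $\lambda>0$, $$\left|\{(z_1,z_2)\in\mathbb{D}^2 : |P(f)(z_1,z_2)|>\lambda\}\right| \le \frac{C\,\|f\|_{L^1(\mathbb{D}^2)}}{\lambda}.$$
   Context: $\mathbb{D}$ is the unit disc in $\mathbb{C}$, $\mathbb{D}^2=\mathbb{D}\times\mathbb{D}$, $dV$ is Lebesgue measure and $|U|$ denotes the Lebesgue measure of a set $U$. The Bergman projection on $\mathbb{D}^2$ is the orthogonal projection of $L^2(\mathbb{D}^2)$ onto the closed subspace of square-integrable holomorphic functions; it is given by $P(f)(z)=\int_{\mathbb{D}^2}K_{\mathbb{D}^2}(z;\bar w)f(w)\,dV(w)$ with $K_{\mathbb{D}^2}(z;\bar w)=\prod_{j=1}^2\frac{1}{\pi(1-z_j\bar w_j)^2}$. *)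

theory Defs
  imports "HOL-Analysis.Analysis"
begin

definition bidisc :: "(complex \<times> complex) set" where
  "bidisc = ball 0 1 \<times> ball 0 1"

definition bergman_kernel :: "complex \<times> complex \<Rightarrow> complex \<times> complex \<Rightarrow> complex" where
  "bergman_kernel z w =
     (1 / (of_real pi * (1 - fst z * cnj (fst w))\<^sup>2)) *
     (1 / (of_real pi * (1 - snd z * cnj (snd w))\<^sup>2))"

definition bergman_proj :: "(complex \<times> complex \<Rightarrow> complex) \<Rightarrow> complex \<times> complex \<Rightarrow> complex" where
  "bergman_proj f z = (LINT w | lebesgue_on bidisc. bergman_kernel z w * f w)"

end

theory Submission
  imports Defs
begin

text \<open>
  Let \<open>h = 2\<^sup>-\<^sup>n\<close> and let \<open>f\<close> be the indicator of \<open>Q \<times> Q\<close>, where \<open>Q\<close> is the square of side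
  \<open>h/20\<close> centred at \<open>1 - h\<close>, so that \<open>\<parallel>f\<parallel>\<^sub>1 = (h/20)\<^sup>4\<close>. Whenever both distances
  \<open>d\<^sub>i = |1 - z\<^sub>i (1 - h)|\<close> are at least \<open>h\<close>, the kernel \<open>K(z; w)\<close> stays within half of
  \<open>K(z; (1 - h, 1 - h))\<close> for \<open>w \<in> Q \<times> Q\<close>, hence \<open>|Pf(z)| \<ge> \<parallel>f\<parallel>\<^sub>1 / (2\<pi>\<^sup>2 d\<^sub>1\<^sup>2 d\<^sub>2\<^sup>2)\<close>.
  On each of the \<open>n - 1\<close> disjoint boxes \<open>S(2\<^sup>-\<^sup>j) \<times> S(2\<^sup>j\<^sup>-\<^sup>n)\<close>, where \<open>S(s)\<close> is a square of
  side about \<open>s\<close> next to the boundary point 1, one has \<open>d\<^sub>1 d\<^sub>2 \<le> 4h\<close>, so \<open>|Pf| \<ge> \<parallel>f\<parallel>\<^sub>1/(32\<pi>\<^sup>2h\<^sup>2)\<close>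
  there. The level set at \<open>\<lambda> = \<parallel>f\<parallel>\<^sub>1/(64\<pi>\<^sup>2h\<^sup>2)\<close> thus has measure at least \<open>(n - 1) h\<^sup>2/4\<close>,
  while weak type (1,1) would bound it by \<open>C \<parallel>f\<parallel>\<^sub>1/\<lambda> = 64\<pi>\<^sup>2 C h\<^sup>2\<close>; this fails for large \<open>n\<close>.
\<close>

lemma norm_mult_sub_one_le:
  fixes x y :: "'a::real_normed_field"
  assumes "norm (x - 1) \<le> X - 1" "norm (y - 1) \<le> Y - 1"
  shows "norm (x * y - 1) \<le> X * Y - 1"
proof -
  have "norm (x * y - 1) = norm ((x - 1) * (y - 1) + (x - 1) + (y - 1))"
    by (simp add: algebra_simps)
  also have "\<dots> \<le> norm (x - 1) * norm (y - 1) + norm (x - 1) + norm (y - 1)"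
    by (smt (verit) norm_mult norm_triangle_ineq)
  also have "\<dots> \<le> (X - 1) * (Y - 1) + (X - 1) + (Y - 1)"
    using assms order_trans[OF norm_ge_zero assms(1)] by (intro add_mono mult_mono) auto
  finally show ?thesis by (simp add: algebra_simps)
qed

lemma norm_inverse_squares_diff_le:
  fixes a1 a2 b1 b2 :: "'a::real_normed_field"
  assumes "a1 \<noteq> 0" "a2 \<noteq> 0"
    and "20 * norm (b1 - a1) \<le> norm a1" "20 * norm (b2 - a2) \<le> norm a2"
  shows "norm (1 / (b1\<^sup>2 * b2\<^sup>2) - 1 / (a1\<^sup>2 * a2\<^sup>2)) \<le> norm (1 / (a1\<^sup>2 * a2\<^sup>2)) / 2"
proof -
  define q where "q = (b1 / a1)\<^sup>2 * (b2 / a2)\<^sup>2"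
  have ratio_near: "norm (b / a - 1) \<le> 21/20 - 1" if "a \<noteq> 0" "20 * norm (b - a) \<le> norm a" for a b :: 'a
  proof -
    have "b / a - 1 = (b - a) / a"
      using \<open>a \<noteq> 0\<close> by (simp add: field_simps)
    then show ?thesis
      using that by (simp add: norm_divide divide_le_eq)
  qed
  have "norm (q - 1) \<le> (21/20 * (21/20)) * (21/20 * (21/20)) - 1"
    unfolding q_def power2_eq_square
    using ratio_near[OF assms(1,3)] ratio_near[OF assms(2,4)] by (intro norm_mult_sub_one_le)
  then have q_near: "norm (q - 1) \<le> 1/4"
    by simp
  then have q_large: "3/4 \<le> norm q"
    using norm_triangle_ineq2[of 1 q] by (simp add: norm_minus_commute)
  have "b1\<^sup>2 * b2\<^sup>2 = q * (a1\<^sup>2 * a2\<^sup>2)"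
    using assms(1,2) by (simp add: q_def power_divide)
  moreover have "q \<noteq> 0"
    using q_large by auto
  ultimately have "1 / (b1\<^sup>2 * b2\<^sup>2) - 1 / (a1\<^sup>2 * a2\<^sup>2) = (1 - q) / q * (1 / (a1\<^sup>2 * a2\<^sup>2))"
    using assms(1,2) by (simp add: field_simps)
  then have "norm (1 / (b1\<^sup>2 * b2\<^sup>2) - 1 / (a1\<^sup>2 * a2\<^sup>2))
      = norm (q - 1) / norm q * norm (1 / (a1\<^sup>2 * a2\<^sup>2))"
    by (simp add: norm_mult norm_divide norm_minus_commute)
  also have "\<dots> \<le> (1/4) / (3/4) * norm (1 / (a1\<^sup>2 * a2\<^sup>2))"
    using q_near q_large by (intro mult_right_mono frac_le) auto
  also have "\<dots> \<le> norm (1 / (a1\<^sup>2 * a2\<^sup>2)) / 2"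
    by simp
  finally show ?thesis .
qed

lemma bergman_kernel_eq:
  "bergman_kernel z w =
     1 / (of_real pi)\<^sup>2 * (1 / ((1 - fst z * cnj (fst w))\<^sup>2 * (1 - snd z * cnj (snd w))\<^sup>2))"
  by (simp add: bergman_kernel_def power2_eq_square)

lemma norm_bergman_kernel:
  "norm (bergman_kernel z w) =
     1 / (pi\<^sup>2 * (norm (1 - fst z * cnj (fst w)) * norm (1 - snd z * cnj (snd w)))\<^sup>2)"
  by (simp add: bergman_kernel_def norm_mult norm_divide norm_power power_mult_distrib power2_eq_square)

lemma norm_bergman_kernel_diff_le:
  assumes "norm (fst z) \<le> 1" "norm (snd z) \<le> 1"
    and "20 * norm (fst w - fst p) \<le> norm (1 - fst z * cnj (fst p))"
    and "20 * norm (snd w - snd p) \<le> norm (1 - snd z * cnj (snd p))"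
  shows "norm (bergman_kernel z w - bergman_kernel z p) \<le> norm (bergman_kernel z p) / 2"
proof -
  define a1 a2 b1 b2 where "a1 = 1 - fst z * cnj (fst p)" and "a2 = 1 - snd z * cnj (snd p)"
    and "b1 = 1 - fst z * cnj (fst w)" and "b2 = 1 - snd z * cnj (snd w)"
  have shift: "norm ((1 - c * cnj v) - (1 - c * cnj u)) \<le> norm (v - u)" if "norm c \<le> 1" for c u v
  proof -
    have "norm ((1 - c * cnj v) - (1 - c * cnj u)) = norm c * norm (v - u)"
      by (simp add: norm_mult norm_minus_commute flip: right_diff_distrib complex_cnj_diff)
    then show ?thesis
      using that by (simp add: mult_left_le_one_le)
  qed
  have "norm (b1 - a1) \<le> norm (fst w - fst p)" "norm (b2 - a2) \<le> norm (snd w - snd p)"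
    unfolding a1_def a2_def b1_def b2_def by (meson shift assms(1,2))+
  then have b1: "20 * norm (b1 - a1) \<le> norm a1" and b2: "20 * norm (b2 - a2) \<le> norm a2"
    using assms(3,4) by (simp_all add: a1_def a2_def)
  show ?thesis
  proof (cases "a1 = 0 \<or> a2 = 0")
    case True
    \<comment> \<open>then also \<open>b1 b2 = 0\<close>, and both kernels are \<open>0\<close> by the convention \<open>x / 0 = 0\<close>\<close>
    moreover have "a1 = 0 \<Longrightarrow> b1 = 0" "a2 = 0 \<Longrightarrow> b2 = 0"
      using b1 b2 by auto
    ultimately have "a1 * a2 = 0" "b1 * b2 = 0"
      by auto
    then show ?thesis
      unfolding bergman_kernel_eq by (auto simp flip: a1_def a2_def b1_def b2_def)
  next
    case False
    then have "norm (1 / (b1\<^sup>2 * b2\<^sup>2) - 1 / (a1\<^sup>2 * a2\<^sup>2)) \<le> norm (1 / (a1\<^sup>2 * a2\<^sup>2)) / 2"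
      using b1 b2 by (intro norm_inverse_squares_diff_le) auto
    then have "norm (1 / (of_real pi :: complex)\<^sup>2) * norm (1 / (b1\<^sup>2 * b2\<^sup>2) - 1 / (a1\<^sup>2 * a2\<^sup>2))
        \<le> norm (1 / (of_real pi :: complex)\<^sup>2) * norm (1 / (a1\<^sup>2 * a2\<^sup>2)) / 2"
      by (metis mult_left_mono norm_ge_zero times_divide_eq_right)
    then show ?thesis
      unfolding bergman_kernel_eq a1_def[symmetric] a2_def[symmetric] b1_def[symmetric] b2_def[symmetric]
      by (simp only: norm_mult right_diff_distrib[symmetric])
  qed
qed

lemma open_bidisc: "open bidisc"
  unfolding bidisc_def by (intro open_Times open_ball)

lemma lborel_bidisc [measurable]: "bidisc \<in> sets lborel"
  by (simp add: open_bidisc)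

lemma lebesgue_bidisc [measurable]: "bidisc \<in> sets lebesgue"
  by (simp add: open_bidisc)

lemma borel_measurable_cnj [measurable]: "cnj \<in> borel_measurable borel"
  by (intro borel_measurable_continuous_onI continuous_intros)

lemma borel_measurable_bergman_kernel:
  "(\<lambda>x. bergman_kernel (fst x) (snd x)) \<in> borel_measurable (borel \<Otimes>\<^sub>M borel)"
proof -
  have "(\<lambda>x. bergman_kernel (fst x) (snd x))
      \<in> borel_measurable ((borel \<Otimes>\<^sub>M borel) \<Otimes>\<^sub>M (borel \<Otimes>\<^sub>M borel))"
    unfolding bergman_kernel_def by measurable
  then show ?thesis
    by (simp add: borel_prod)
qed

lemma borel_measurable_bergman_kernel_right [measurable]: "bergman_kernel z \<in> borel_measurable borel"
  using measurable_Pair2[OF borel_measurable_bergman_kernel] by simp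

lemma borel_measurable_bergman_proj:
  assumes [measurable]: "f \<in> borel_measurable borel"
  shows "bergman_proj f \<in> borel_measurable borel"
proof -
  have eq: "bergman_proj f z = (\<integral>w. indicator bidisc w *\<^sub>R (bergman_kernel z w * f w) \<partial>lborel)" for z
    unfolding bergman_proj_def
    by (subst integral_restrict_space) (simp_all add: integral_completion)
  have "measurable (borel \<Otimes>\<^sub>M lborel) (borel :: complex measure)
      = measurable (borel \<Otimes>\<^sub>M borel) borel"
    by (intro measurable_cong_sets sets_pair_measure_cong) auto
  then have [measurable]: "(\<lambda>x. bergman_kernel (fst x) (snd x)) \<in> borel_measurable (borel \<Otimes>\<^sub>M lborel)"
    using borel_measurable_bergman_kernel by simp
  show ?thesis
    unfolding eq[abs_def]
    by (rule lborel.borel_measurable_lebesgue_integral) (simp add: split_beta', measurable)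
qed

lemma norm_integral_indicator_ge:
  fixes g :: "'a \<Rightarrow> 'b::{banach, second_countable_topology}"
  assumes [measurable]: "A \<in> sets M" "g \<in> borel_measurable M"
    and finite: "emeasure M A < \<infinity>"
    and near: "\<And>w. w \<in> A \<Longrightarrow> norm (g w - c) \<le> norm c / 2"
  shows "measure M A * norm c / 2 \<le> norm (\<integral>w. indicator A w *\<^sub>R g w \<partial>M)"
proof -
  have int_c: "integrable M (\<lambda>w. indicator A w *\<^sub>R c)"
    using finite by (intro integrableI_bounded_set_indicator[where B="norm c"]) auto
  have int_diff: "integrable M (\<lambda>w. indicator A w *\<^sub>R (g w - c))"
    using finite near by (intro integrableI_bounded_set_indicator[where B="norm c / 2"]) auto
  have int_bound: "integrable M (\<lambda>w. indicator A w *\<^sub>R (norm c / 2))"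
    using finite by (intro integrableI_bounded_set_indicator[where B="norm c / 2"]) auto
  have "(\<integral>w. indicator A w *\<^sub>R g w \<partial>M)
      = (\<integral>w. indicator A w *\<^sub>R c + indicator A w *\<^sub>R (g w - c) \<partial>M)"
    by (simp add: scaleR_diff_right)
  also have "\<dots> = (\<integral>w. indicator A w *\<^sub>R c \<partial>M) + (\<integral>w. indicator A w *\<^sub>R (g w - c) \<partial>M)"
    by (rule Bochner_Integration.integral_add[OF int_c int_diff])
  also have "(\<integral>w. indicator A w *\<^sub>R c \<partial>M) = measure M A *\<^sub>R c"
    using finite by simp
  finally have split: "(\<integral>w. indicator A w *\<^sub>R g w \<partial>M)
      = measure M A *\<^sub>R c + (\<integral>w. indicator A w *\<^sub>R (g w - c) \<partial>M)" .
  have "norm (\<integral>w. indicator A w *\<^sub>R (g w - c) \<partial>M)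
      \<le> (\<integral>w. norm (indicator A w *\<^sub>R (g w - c)) \<partial>M)"
    by (rule integral_norm_bound)
  also have "\<dots> \<le> (\<integral>w. indicator A w *\<^sub>R (norm c / 2) \<partial>M)"
    using near by (intro integral_mono integrable_norm int_diff int_bound) (auto simp: indicator_def)
  also have "\<dots> = measure M A * (norm c / 2)"
    using finite by simp
  finally show ?thesis
    using norm_diff_ineq[of "measure M A *\<^sub>R c" "\<integral>w. indicator A w *\<^sub>R (g w - c) \<partial>M"]
    unfolding split by simp
qed

lemma norm_bergman_proj_indicator_ge:
  assumes [measurable]: "A \<in> sets borel"
    and "A \<subseteq> bidisc" "emeasure lborel A < \<infinity>"
    and "\<And>w. w \<in> A \<Longrightarrow> norm (bergman_kernel z w - bergman_kernel z p) \<le> norm (bergman_kernel z p) / 2"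
  shows "measure lborel A * norm (bergman_kernel z p) / 2
    \<le> norm (bergman_proj (\<lambda>w. of_real (indicator A w)) z)"
proof -
  have A_sets: "A \<in> sets (lebesgue_on bidisc)"
    using assms(2) by (simp add: sets_restrict_space_iff)
  have A_measure: "emeasure (lebesgue_on bidisc) A = emeasure lborel A"
    using assms(2) by (simp add: emeasure_restrict_space)
  have "(\<lambda>w. bergman_kernel z w) \<in> borel_measurable (lebesgue_on bidisc)"
    by (intro measurable_restrict_space1 measurable_completion) measurable
  moreover have "bergman_proj (\<lambda>w. of_real (indicator A w)) z
      = (\<integral>w. indicator A w *\<^sub>R bergman_kernel z w \<partial>lebesgue_on bidisc)"
    unfolding bergman_proj_def by (simp add: scaleR_conv_of_real mult.commute)
  ultimately show ?thesis
    using norm_integral_indicator_ge[OF A_sets _ _ assms(4)] A_measure assms(3)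
    by (simp add: measure_def)
qed

lemma emeasure_lborel_Times:
  fixes A :: "'a::euclidean_space set" and B :: "'b::euclidean_space set"
  assumes "A \<in> sets borel" "B \<in> sets borel"
  shows "emeasure lborel (A \<times> B) = emeasure lborel A * emeasure lborel B"
  using assms by (simp add: lborel_prod[symmetric] lborel.emeasure_pair_measure_Times)

lemma emeasure_lborel_box_complex:
  "a \<le> c \<Longrightarrow> b \<le> d \<Longrightarrow> emeasure lborel (box (Complex a b) (Complex c d)) = ennreal ((c - a) * (d - b))"
  by (simp add: emeasure_lborel_box_eq Basis_complex_def ennreal_mult)

definition corner_square :: "real \<Rightarrow> complex set" where
  "corner_square s = box (Complex (1 - s) (- s / 2)) (Complex (1 - s / 2) (s / 2))"

definition test_square :: "real \<Rightarrow> complex set" where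
  "test_square h = box (Complex (1 - h - h / 40) (- h / 40)) (Complex (1 - h + h / 40) (h / 40))"

definition test_function :: "real \<Rightarrow> complex \<times> complex \<Rightarrow> complex" where
  "test_function h w = of_real (indicator (test_square h \<times> test_square h) w)"

definition corner_boxes :: "nat \<Rightarrow> (complex \<times> complex) set" where
  "corner_boxes n = (\<Union>j\<in>{1..<n}. corner_square ((1/2)^j) \<times> corner_square ((1/2)^(n - j)))"

lemma open_corner_square: "open (corner_square s)"
  unfolding corner_square_def by (rule open_box)

lemma open_test_square: "open (test_square h)"
  unfolding test_square_def by (rule open_box)

lemma borel_corner_square [measurable]: "corner_square s \<in> sets borel"
  by (simp add: open_corner_square)

lemma borel_test_square [measurable]: "test_square h \<in> sets borel"
  by (simp add: open_test_square)

lemma borel_test_squares [measurable]: "test_square h \<times> test_square h \<in> sets borel"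
  by (simp add: open_Times open_test_square)

lemma mem_corner_square:
  "z \<in> corner_square s \<longleftrightarrow> 1 - s < Re z \<and> Re z < 1 - s / 2 \<and> - s / 2 < Im z \<and> Im z < s / 2"
  by (auto simp: corner_square_def mem_box Basis_complex_def)

lemma mem_test_square:
  "w \<in> test_square h \<longleftrightarrow>
     1 - h - h / 40 < Re w \<and> Re w < 1 - h + h / 40 \<and> - h / 40 < Im w \<and> Im w < h / 40"
  by (auto simp: test_square_def mem_box Basis_complex_def)

lemma corner_square_subset_ball:
  assumes "s \<le> 1"
  shows "corner_square s \<subseteq> ball 0 1"
proof
  fix z assume "z \<in> corner_square s"
  then have re: "1 - s < Re z" "Re z < 1 - s / 2" and im: "\<bar>Im z\<bar> < s / 2"
    by (auto simp: mem_corner_square)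
  have "(Re z)\<^sup>2 < (1 - s / 2)\<^sup>2"
    using re assms by (intro power_strict_mono) auto
  moreover have "(Im z)\<^sup>2 < (s / 2)\<^sup>2"
    using im power_strict_mono[of "\<bar>Im z\<bar>" "s / 2" 2] by simp
  moreover have "s * s \<le> s"
    using im assms by (intro mult_left_le_one_le) auto
  moreover have "(1 - s / 2)\<^sup>2 + (s / 2)\<^sup>2 = 1 - s + s * s / 2"
    by (simp add: power2_eq_square field_simps)
  moreover have "0 < s"
    using im by linarith
  ultimately have "(Re z)\<^sup>2 + (Im z)\<^sup>2 < 1"
    by linarith
  then show "z \<in> ball 0 1"
    by (simp add: norm_complex_def)
qed

lemma corner_square_bounds:
  assumes "s \<le> 1" "0 < h" "h \<le> s / 2" "z \<in> corner_square s"
  shows "h \<le> norm (1 - z * of_real (1 - h))" "norm (1 - z * of_real (1 - h)) \<le> 2 * s"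
proof -
  have re: "1 - s < Re z" "Re z < 1 - s / 2" and im: "\<bar>Im z\<bar> < s / 2"
    using assms(4) by (auto simp: mem_corner_square)
  have "Re (1 - z * of_real (1 - h)) = 1 - Re z + h * Re z"
    by (simp add: algebra_simps)
  moreover have "0 < h * Re z" "h * Re z \<le> h"
    using re assms by (auto intro: mult_left_le)
  ultimately have "s / 2 < Re (1 - z * of_real (1 - h))" "Re (1 - z * of_real (1 - h)) \<le> s + h"
    using re by linarith+
  moreover have "\<bar>Im z * (1 - h)\<bar> \<le> \<bar>Im z\<bar>"
    using assms by (auto simp: abs_mult intro!: mult_left_le)
  then have "\<bar>Im (1 - z * of_real (1 - h))\<bar> \<le> s / 2"
    using im by simp
  ultimately show "h \<le> norm (1 - z * of_real (1 - h))" "norm (1 - z * of_real (1 - h)) \<le> 2 * s"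
    using abs_Re_le_cmod[of "1 - z * of_real (1 - h)"] cmod_le[of "1 - z * of_real (1 - h)"] assms(3)
    by linarith+
qed

lemma test_square_near_center:
  assumes "w \<in> test_square h"
  shows "20 * norm (w - of_real (1 - h)) < h"
proof -
  have "\<bar>Re (w - of_real (1 - h))\<bar> < h / 40" "\<bar>Im (w - of_real (1 - h))\<bar> < h / 40"
    using assms unfolding mem_test_square abs_less_iff by auto
  then show ?thesis
    using cmod_le[of "w - of_real (1 - h)"] by linarith
qed

lemma test_square_subset_ball:
  assumes "h \<le> 1/2"
  shows "test_square h \<subseteq> ball 0 1"
proof
  fix w assume w: "w \<in> test_square h"
  note close = test_square_near_center[OF w]
  have "norm w \<le> norm (of_real (1 - h) :: complex) + norm (w - of_real (1 - h))"
    by (metis add.commute diff_add_cancel norm_triangle_ineq)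
  moreover have "norm (of_real (1 - h) :: complex) = 1 - h"
    using assms(1) by (simp only: norm_of_real abs_of_nonneg)
  ultimately have "norm w < 1"
    using close norm_ge_zero[of "w - of_real (1 - h)"] by linarith
  then show "w \<in> ball 0 1"
    by simp
qed

lemma emeasure_corner_square: "0 < s \<Longrightarrow> emeasure lborel (corner_square s) = ennreal (s\<^sup>2 / 2)"
  unfolding corner_square_def by (subst emeasure_lborel_box_complex) (auto simp: power2_eq_square)

lemma emeasure_test_square: "0 < h \<Longrightarrow> emeasure lborel (test_square h) = ennreal ((h / 20)\<^sup>2)"
  unfolding test_square_def by (subst emeasure_lborel_box_complex) (auto simp: power2_eq_square)

lemma emeasure_test_squares:
  assumes "0 < h"
  shows "emeasure lborel (test_square h \<times> test_square h) = ennreal ((h / 20) ^ 4)"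
proof -
  have "emeasure lborel (test_square h \<times> test_square h) = ennreal ((h / 20)\<^sup>2) * ennreal ((h / 20)\<^sup>2)"
    using assms by (simp add: emeasure_lborel_Times emeasure_test_square)
  also have "\<dots> = ennreal ((h / 20) ^ 4)"
    by (simp flip: ennreal_mult power_add)
  finally show ?thesis .
qed

lemma measure_test_squares: "0 < h \<Longrightarrow> measure lborel (test_square h \<times> test_square h) = (h / 20) ^ 4"
  by (simp add: measure_def emeasure_test_squares)

lemma corner_square_disjoint:
  assumes "j < k"
  shows "corner_square ((1/2)^j) \<inter> corner_square ((1/2)^k) = {}"
proof -
  have "(1/2::real)^k \<le> (1/2)^(Suc j)"
    using assms by (intro power_decreasing) auto
  then show ?thesis
    by (auto simp: mem_corner_square)
qed

lemma emeasure_corner_boxes: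
  "emeasure lborel (corner_boxes n) = ennreal (real (n - 1) * ((1/2)^n)\<^sup>2 / 4)"
proof -
  define B where "B j = corner_square ((1/2)^j) \<times> corner_square ((1/2::real)^(n - j))" for j
  have disjoint: "disjoint_family_on B {1..<n}"
    unfolding disjoint_family_on_def
  proof (intro ballI impI)
    fix j k assume "j \<in> {1..<n}" "k \<in> {1..<n}" "j \<noteq> k"
    then have "corner_square ((1/2)^j) \<inter> corner_square ((1/2::real)^k) = {}"
      using corner_square_disjoint[of j k] corner_square_disjoint[of k j]
      by (cases "j < k") (auto simp: Int_commute)
    then show "B j \<inter> B k = {}"
      by (auto simp: B_def)
  qed
  have B_sets: "B j \<in> sets lborel" for j
    by (simp add: B_def open_Times open_corner_square)
  have B_measure: "emeasure lborel (B j) = ennreal (((1/2)^n)\<^sup>2 / 4)" if "j \<in> {1..<n}" for j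
  proof -
    have "emeasure lborel (B j) = ennreal (((1/2)^j)\<^sup>2 / 2) * ennreal (((1/2)^(n - j))\<^sup>2 / 2)"
      by (simp add: B_def emeasure_lborel_Times emeasure_corner_square)
    also have "\<dots> = ennreal (((1/2)^j * (1/2)^(n - j))\<^sup>2 / 4)"
      by (simp add: power_mult_distrib flip: ennreal_mult)
    also have "(1/2::real)^j * (1/2)^(n - j) = (1/2)^n"
      using that by (simp flip: power_add)
    finally show ?thesis .
  qed
  have "emeasure lborel (corner_boxes n) = (\<Sum>j\<in>{1..<n}. emeasure lborel (B j))"
    unfolding corner_boxes_def B_def[symmetric] using disjoint B_sets by (intro sum_emeasure[symmetric]) auto
  also have "\<dots> = (\<Sum>j\<in>{1..<n}. ennreal (((1/2)^n)\<^sup>2 / 4))"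
    using B_measure by simp
  finally show ?thesis
    by (simp add: ennreal_of_nat_eq_real_of_nat flip: ennreal_mult)
qed

lemma borel_measurable_test_function [measurable]: "test_function h \<in> borel_measurable borel"
  unfolding test_function_def by measurable

lemma borel_measurable_test_function_lebesgue_on: "test_function h \<in> borel_measurable (lebesgue_on S)"
  by (intro measurable_restrict_space1 measurable_completion) (simp add: borel_measurable_test_function)

lemma norm_test_function_le: "norm (test_function h w) \<le> 1"
  by (simp add: test_function_def indicator_def)

lemma integral_norm_test_function:
  assumes "0 < h" "h \<le> 1/2"
  shows "(LINT w | lebesgue_on bidisc. norm (test_function h w)) = (h / 20) ^ 4"
proof -
  have "test_square h \<times> test_square h \<subseteq> bidisc"
    using test_square_subset_ball[OF assms(2)] by (auto simp: bidisc_def)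
  then have "(LINT w | lebesgue_on bidisc. norm (test_function h w))
      = measure (lebesgue_on bidisc) (test_square h \<times> test_square h)"
    by (simp add: test_function_def Int_absorb2)
  also have "\<dots> = (h / 20) ^ 4"
    using \<open>_ \<subseteq> bidisc\<close> assms(1) by (simp add: measure_restrict_space measure_test_squares)
  finally show ?thesis .
qed

lemma norm_bergman_proj_test_function_ge:
  assumes "s1 \<le> 1" "s2 \<le> 1" "0 < h" "h = s1 * s2" "h \<le> s1 / 2" "h \<le> s2 / 2"
    and z: "z \<in> corner_square s1 \<times> corner_square s2"
  shows "(h / 20) ^ 4 / (32 * pi\<^sup>2 * h\<^sup>2) \<le> norm (bergman_proj (test_function h) z)"
proof -
  define t :: complex where "t = of_real (1 - h)"
  define Q where "Q = test_square h \<times> test_square h"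
  define d1 d2 where "d1 = norm (1 - fst z * t)" and "d2 = norm (1 - snd z * t)"
  have z_disc: "norm (fst z) < 1" "norm (snd z) < 1"
    using z corner_square_subset_ball[OF assms(1)] corner_square_subset_ball[OF assms(2)] by auto
  have d1: "h \<le> d1" "d1 \<le> 2 * s1" and d2: "h \<le> d2" "d2 \<le> 2 * s2"
    using z corner_square_bounds[OF assms(1,3,5)] corner_square_bounds[OF assms(2,3,6)]
    by (auto simp: d1_def d2_def t_def)
  have "h \<le> 1/2"
    using assms(1,5) by linarith
  then have "Q \<subseteq> bidisc"
    using test_square_subset_ball by (auto simp: Q_def bidisc_def)
  moreover have "emeasure lborel Q < \<infinity>"
    using assms(3) by (simp add: Q_def emeasure_test_squares)
  moreover have "norm (bergman_kernel z w - bergman_kernel z (t, t)) \<le> norm (bergman_kernel z (t, t)) / 2"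
    if "w \<in> Q" for w
  proof (rule norm_bergman_kernel_diff_le)
    show "20 * norm (fst w - fst (t, t)) \<le> norm (1 - fst z * cnj (fst (t, t)))"
      "20 * norm (snd w - snd (t, t)) \<le> norm (1 - snd z * cnj (snd (t, t)))"
      using that test_square_near_center d1(1) d2(1) by (force simp: Q_def d1_def d2_def t_def)+
  qed (use z_disc in auto)
  ultimately have lower: "(h / 20) ^ 4 * norm (bergman_kernel z (t, t)) / 2
      \<le> norm (bergman_proj (test_function h) z)"
    using norm_bergman_proj_indicator_ge[of Q z "(t, t)"] assms(3)
    by (simp add: Q_def test_function_def[abs_def] measure_test_squares)
  have "d1 * d2 \<le> (2 * s1) * (2 * s2)"
    using d1 d2 assms(3,5) by (intro mult_mono) auto
  then have "pi\<^sup>2 * (d1 * d2)\<^sup>2 \<le> 16 * pi\<^sup>2 * h\<^sup>2"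
    using d1(1) d2(1) assms(3,4) power_mono[of "d1 * d2" "4 * h" 2] by (simp add: power_mult_distrib)
  moreover have "0 < pi\<^sup>2 * (d1 * d2)\<^sup>2"
    using d1(1) d2(1) assms(3) by simp
  ultimately have "1 / (16 * pi\<^sup>2 * h\<^sup>2) \<le> norm (bergman_kernel z (t, t))"
    by (simp add: norm_bergman_kernel d1_def d2_def t_def frac_le)
  then have "(h / 20) ^ 4 / 2 * (1 / (16 * pi\<^sup>2 * h\<^sup>2)) \<le> (h / 20) ^ 4 / 2 * norm (bergman_kernel z (t, t))"
    using assms(3) by (intro mult_left_mono) auto
  with lower show ?thesis
    by simp
qed

lemma emeasure_bergman_proj_level_set_ge:
  fixes n :: nat
  assumes h: "h = (1/2::real)^n"
  shows "ennreal (real (n - 1) * h\<^sup>2 / 4)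
    \<le> emeasure lebesgue {z \<in> bidisc. norm (bergman_proj (test_function h) z) > (h / 20) ^ 4 / (64 * pi\<^sup>2 * h\<^sup>2)}"
    (is "_ \<le> emeasure lebesgue ?L")
proof -
  have "0 < h"
    by (simp add: h)
  have "corner_boxes n \<subseteq> ?L"
  proof
    fix z assume "z \<in> corner_boxes n"
    then obtain j where j: "1 \<le> j" "j < n"
      and z: "z \<in> corner_square ((1/2)^j) \<times> corner_square ((1/2)^(n - j))"
      by (auto simp: corner_boxes_def)
    have small: "h \<le> (1/2)^j / 2" "h \<le> (1/2)^(n - j) / 2"
      using j power_decreasing[of "Suc j" n "1/2::real"] power_decreasing[of "Suc (n - j)" n "1/2::real"]
      by (auto simp: h)
    have at_most_one: "(1/2::real)^j \<le> 1" "(1/2::real)^(n - j) \<le> 1"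
      by (simp_all add: power_le_one)
    have "h = (1/2)^j * (1/2)^(n - j)"
      using j by (simp add: h flip: power_add)
    then have large: "(h / 20) ^ 4 / (32 * pi\<^sup>2 * h\<^sup>2) \<le> norm (bergman_proj (test_function h) z)"
      using norm_bergman_proj_test_function_ge[OF at_most_one \<open>0 < h\<close> _ small z] by simp
    have "(h / 20) ^ 4 / (64 * pi\<^sup>2 * h\<^sup>2) < (h / 20) ^ 4 / (32 * pi\<^sup>2 * h\<^sup>2)"
      using \<open>0 < h\<close> by (intro divide_strict_left_mono) auto
    then have level: "(h / 20) ^ 4 / (64 * pi\<^sup>2 * h\<^sup>2) < norm (bergman_proj (test_function h) z)"
      using large by (rule less_le_trans)
    have "corner_square ((1/2)^j) \<times> corner_square ((1/2)^(n - j)) \<subseteq> bidisc"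
      unfolding bidisc_def
      using corner_square_subset_ball[OF at_most_one(1)] corner_square_subset_ball[OF at_most_one(2)]
      by (rule Sigma_mono)
    then have "z \<in> bidisc"
      using z by (rule subsetD)
    then show "z \<in> ?L"
      using level unfolding mem_Collect_eq by (rule conjI)
  qed
  moreover have [measurable]: "bergman_proj (test_function h) \<in> borel_measurable lborel"
    using borel_measurable_bergman_proj[OF borel_measurable_test_function] by simp
  have "?L \<in> sets lborel"
    by measurable
  ultimately have "emeasure lborel (corner_boxes n) \<le> emeasure lebesgue ?L"
    by (simp add: emeasure_mono)
  moreover have "emeasure lborel (corner_boxes n) = ennreal (real (n - 1) * h\<^sup>2 / 4)"
    by (simp add: emeasure_corner_boxes h)
  ultimately show ?thesis
    by (simp only:)
qed

theorem theorem3p1: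
  shows "\<not> (\<exists>C::real. C > 0 \<and>
           (\<forall>f :: complex \<times> complex \<Rightarrow> complex.
              f \<in> borel_measurable (lebesgue_on bidisc) \<longrightarrow>
              (\<exists>B. \<forall>w\<in>bidisc. norm (f w) \<le> B) \<longrightarrow>
              (\<forall>lam::real. lam > 0 \<longrightarrow>
                 emeasure lebesgue {z \<in> bidisc. norm (bergman_proj f z) > lam}
                   \<le> ennreal (C * (LINT w | lebesgue_on bidisc. norm (f w)) / lam))))"
  (is "\<not> (\<exists>C. ?weak_type C)")
proof
  assume "\<exists>C. ?weak_type C"
  then obtain C :: real where "C > 0" and weak_type: "\<And>f lam. f \<in> borel_measurable (lebesgue_on bidisc) \<Longrightarrow>
      \<exists>B. \<forall>w\<in>bidisc. norm (f w) \<le> B \<Longrightarrow> lam > 0 \<Longrightarrow>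
      emeasure lebesgue {z \<in> bidisc. norm (bergman_proj f z) > lam}
        \<le> ennreal (C * (LINT w | lebesgue_on bidisc. norm (f w)) / lam)"
    by blast
  obtain n :: nat where n: "256 * pi\<^sup>2 * C + 1 < real n"
    using reals_Archimedean2 by blast
  define h :: real where "h = (1/2)^n"
  define lam where "lam = (h / 20) ^ 4 / (64 * pi\<^sup>2 * h\<^sup>2)"
  have "0 < pi\<^sup>2 * C"
    using \<open>C > 0\<close> by simp
  then have "1 \<le> n"
    using n by linarith
  then have "0 < h" "h \<le> 1/2"
    using power_decreasing[of 1 n "1/2::real"] by (auto simp: h_def)
  have lam: "lam > 0"
    using \<open>0 < h\<close> by (simp add: lam_def)
  have bounded: "\<exists>B. \<forall>w\<in>bidisc. norm (test_function h w) \<le> B"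
    using norm_test_function_le by blast
  have "emeasure lebesgue {z \<in> bidisc. norm (bergman_proj (test_function h) z) > lam}
      \<le> ennreal (C * (h / 20) ^ 4 / lam)"
    using weak_type[OF borel_measurable_test_function_lebesgue_on bounded lam]
    by (simp only: integral_norm_test_function[OF \<open>0 < h\<close> \<open>h \<le> 1/2\<close>])
  also have "C * (h / 20) ^ 4 / lam = 64 * pi\<^sup>2 * C * h\<^sup>2"
    using \<open>0 < h\<close> by (simp add: lam_def)
  finally have "ennreal (real (n - 1) * h\<^sup>2 / 4) \<le> ennreal (64 * pi\<^sup>2 * C * h\<^sup>2)"
    by (rule order_trans[OF emeasure_bergman_proj_level_set_ge[OF h_def, folded lam_def]])
  then have "(real n - 1) * h\<^sup>2 \<le> (256 * pi\<^sup>2 * C) * h\<^sup>2"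
    using \<open>C > 0\<close> \<open>1 \<le> n\<close> by (simp add: ennreal_le_iff of_nat_diff)
  then show False
    using n \<open>0 < h\<close> by simp
qed

end
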